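(* Let $V_{ij}(s)$, $b_i(s)$, for $i=1,\dots,M$ and $j=1,\dots,N_2$, be real-analytic functions in a neighborhood $W$ of $s_0\in\mathbb{R}^{N_1}$. Denote by $\mathcal{G}$ the collection of real-analytic functions on $W\times\mathbb{R}^{N_2}$, affine in $t=(t^1,\dots,t^{N_2})$, given by $L_i(s,t):=\sum_jV_{ij}(s)t^j-b_i(s)$ for $i=1,\dots,M$. Assume that all functions in $\mathcal{G}$ vanish at $(s_0,t_0)$ for some $t_0\in\mathbb{R}^{N_2}$, and let $A:=\{(s,t)\in W\times\mathbb{R}^{N_2}: f(s,t)=0\ \forall f\in\mathcal{G}\}$. If there exists an integer $\kappa\ge0$ such that for all $s_1\in W$, $\dim\{t:(s_1,t)\in A\}=\kappa$, then $(s_0,t_0)$ is an ordinary zero of $\mathcal{G}$.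
   Context: A point $y_0\in\mathbb{R}^N$ is an ordinary zero of a family $\mathcal{G}$ of real-analytic functions near $y_0$ vanishing at $y_0$ if there exist $f_1,\dots,f_\kappa\in\mathcal{G}$ whose Jacobian matrix $(\partial f_i/\partial y^j(y_0))$ has rank $\kappa$ and such that the germ at $y_0$ of the common zero set $\{y: f(y)=0\ \forall f\in\mathcal{G}\}$ coincides with the germ at $y_0$ of $\{y:f_1(y)=\dots=f_\kappa(y)=0\}$. The dimension of the (affine) solution set $\{t:(s_1,t)\in A\}$ is its dimension as an affine subspace. *)

theory Defs
  imports "HOL-Analysis.Analysis"
begin

definition multi_indices :: "('a::euclidean_space \<Rightarrow> nat) set" where
  "multi_indices = {\<alpha>. \<forall>b. b \<notin> Basis \<longrightarrow> \<alpha> b = 0}"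

definition real_analytic_at :: "('a::euclidean_space \<Rightarrow> real) \<Rightarrow> 'a \<Rightarrow> bool" where
  "real_analytic_at f x \<longleftrightarrow>
     (\<exists>r>0. \<exists>c :: ('a \<Rightarrow> nat) \<Rightarrow> real. \<forall>y\<in>ball x r.
        ((\<lambda>\<alpha>. c \<alpha> * (\<Prod>b\<in>Basis. ((y - x) \<bullet> b) ^ (\<alpha> b))) has_sum f y) multi_indices)"

definition real_analytic_on :: "('a::euclidean_space \<Rightarrow> real) \<Rightarrow> 'a set \<Rightarrow> bool" where
  "real_analytic_on f W \<longleftrightarrow> (\<forall>x\<in>W. real_analytic_at f x)"

text \<open>Ordinary zero of a family G of real-analytic functions near y0 vanishing at y0:
  there are f_1..f_kappa in G whose Jacobian matrix at y0 (entries = partial derivatives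
  D_i(b) along basis vectors b) has rank kappa, i.e. linearly independent rows, and the
  germ at y0 of the common zero set of G equals the germ of the zero set of f_1..f_kappa.\<close>
definition ordinary_zero :: "('a::euclidean_space \<Rightarrow> real) set \<Rightarrow> 'a \<Rightarrow> bool" where
  "ordinary_zero G y0 \<longleftrightarrow>
     (\<forall>f\<in>G. real_analytic_at f y0 \<and> f y0 = 0) \<and>
     (\<exists>fs Ds. set fs \<subseteq> G \<and> length Ds = length fs \<and>
        (\<forall>i<length fs. ((fs ! i) has_derivative (Ds ! i)) (at y0)) \<and>
        (\<forall>c :: nat \<Rightarrow> real. (\<forall>b\<in>Basis. (\<Sum>i<length fs. c i * (Ds ! i) b) = 0)
             \<longrightarrow> (\<forall>i<length fs. c i = 0)) \<and>
        (\<exists>U. open U \<and> y0 \<in> U \<and>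
           {y\<in>U. \<forall>f\<in>G. f y = 0} = {y\<in>U. \<forall>i<length fs. (fs ! i) y = 0}))"

end

theory Submission
  imports Defs
begin

text \<open>Write \<open>L\<^sub>i(s, t) = v\<^sub>i(s) \<bullet> t - b\<^sub>i(s)\<close> with \<open>v\<^sub>i(s) = (V\<^sub>i\<^sub>j(s))\<^sub>j\<close>. The fibre over \<open>s\<close> is the
  solution set of a linear system, so constant fibre dimension means that the rank of the rows
  \<open>v\<^sub>i(s)\<close> is constant near \<open>s\<^sub>0\<close>. A maximal independent set of rows \<open>v\<^sub>i(s\<^sub>0)\<close>, \<open>i \<in> I\<close>, stays
  independent near \<open>s\<^sub>0\<close>, since independence is an open condition and the \<open>v\<^sub>i\<close> are continuous; by
  constancy of the rank these rows then span all rows, so near \<open>(s\<^sub>0, t\<^sub>0)\<close> the equations with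
  \<open>i \<in> I\<close> imply the others. The \<open>t\<close>-derivatives of these \<open>L\<^sub>i\<close> are the independent rows \<open>v\<^sub>i(s\<^sub>0)\<close>,
  which gives the rank of the Jacobian. Analyticity is used only through continuity of the \<open>V\<^sub>i\<^sub>j\<close>
  and differentiability of the \<open>L\<^sub>i\<close>: a convergent power series is differentiable with its linear
  part as derivative, and the \<open>L\<^sub>i\<close> are analytic because analytic functions are closed under sums,
  constant multiples, multiplication by coordinates and composition with the projection to \<open>s\<close>.\<close>

section \<open>Power series expansions\<close>

definition multi_monomial :: "('a::euclidean_space \<Rightarrow> nat) \<Rightarrow> 'a \<Rightarrow> real" where
  "multi_monomial \<alpha> z = (\<Prod>b\<in>Basis. (z \<bullet> b) ^ \<alpha> b)"

definition multi_degree :: "('a::euclidean_space \<Rightarrow> nat) \<Rightarrow> nat" where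
  "multi_degree \<alpha> = (\<Sum>b\<in>Basis. \<alpha> b)"

definition multi_unit :: "'a \<Rightarrow> 'a \<Rightarrow> nat" where
  "multi_unit b = (\<lambda>u. if u = b then 1 else 0)"

lemma real_analytic_at_iff_multi_monomial:
  "real_analytic_at f x \<longleftrightarrow>
     (\<exists>r>0. \<exists>c. \<forall>y\<in>ball x r. ((\<lambda>\<alpha>. c \<alpha> * multi_monomial \<alpha> (y - x)) has_sum f y) multi_indices)"
  unfolding real_analytic_at_def multi_monomial_def by simp

lemma zero_in_multi_indices: "(\<lambda>_. 0) \<in> multi_indices"
  by (simp add: multi_indices_def)

lemma multi_unit_in_multi_indices: "b \<in> Basis \<Longrightarrow> multi_unit b \<in> multi_indices"
  by (auto simp: multi_indices_def multi_unit_def)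

lemma multi_monomial_zero [simp]: "multi_monomial (\<lambda>_. 0) z = 1"
  by (simp add: multi_monomial_def)

lemma multi_monomial_unit: "b \<in> Basis \<Longrightarrow> multi_monomial (multi_unit b) z = z \<bullet> b"
  by (simp add: multi_monomial_def multi_unit_def if_distrib prod.If_cases Int_absorb1)

lemma has_sum_reindex_extend:
  assumes "inj_on h A" "h ` A \<subseteq> B" "((g \<circ> h) has_sum s) A"
    and "\<And>\<beta>. \<beta> \<in> B - h ` A \<Longrightarrow> g \<beta> = 0"
  shows "(g has_sum s) B"
proof -
  have "(g has_sum s) (h ` A)"
    using has_sum_reindex[OF assms(1)] assms(3) by blast
  then show ?thesis
    using assms(2,4) by (subst has_sum_cong_neutral[where T = "h ` A"]) auto
qed

lemma real_analytic_at_const: "real_analytic_at (\<lambda>_. k) x"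
  unfolding real_analytic_at_iff_multi_monomial
proof (intro exI[of _ 1] conjI exI[of _ "\<lambda>\<alpha>. if \<alpha> = (\<lambda>_. 0) then k else 0"] ballI)
  fix y
  show "((\<lambda>\<alpha>. (if \<alpha> = (\<lambda>_. 0) then k else 0) * multi_monomial \<alpha> (y - x)) has_sum k) multi_indices"
    by (rule has_sum_finite_neutralI[of "{\<lambda>_. 0}"]) (auto simp: zero_in_multi_indices)
qed simp

lemma real_analytic_at_add:
  assumes "real_analytic_at f x" "real_analytic_at g x"
  shows "real_analytic_at (\<lambda>y. f y + g y) x"
proof -
  obtain r1 c1 where r1: "r1 > 0"
    "\<forall>y\<in>ball x r1. ((\<lambda>\<alpha>. c1 \<alpha> * multi_monomial \<alpha> (y - x)) has_sum f y) multi_indices"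
    using assms(1) unfolding real_analytic_at_iff_multi_monomial by blast
  obtain r2 c2 where r2: "r2 > 0"
    "\<forall>y\<in>ball x r2. ((\<lambda>\<alpha>. c2 \<alpha> * multi_monomial \<alpha> (y - x)) has_sum g y) multi_indices"
    using assms(2) unfolding real_analytic_at_iff_multi_monomial by blast
  show ?thesis unfolding real_analytic_at_iff_multi_monomial
  proof (intro exI[of _ "min r1 r2"] conjI exI[of _ "\<lambda>\<alpha>. c1 \<alpha> + c2 \<alpha>"] ballI)
    fix y assume "y \<in> ball x (min r1 r2)"
    then have "((\<lambda>\<alpha>. c1 \<alpha> * multi_monomial \<alpha> (y - x) + c2 \<alpha> * multi_monomial \<alpha> (y - x))
        has_sum (f y + g y)) multi_indices"
      using r1 r2 by (intro has_sum_add) auto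
    then show "((\<lambda>\<alpha>. (c1 \<alpha> + c2 \<alpha>) * multi_monomial \<alpha> (y - x)) has_sum (f y + g y)) multi_indices"
      by (simp add: distrib_right)
  qed (use r1 r2 in auto)
qed

lemma real_analytic_at_cmult:
  assumes "real_analytic_at f x"
  shows "real_analytic_at (\<lambda>y. k * f y) x"
proof -
  obtain r c where r: "r > 0"
    "\<forall>y\<in>ball x r. ((\<lambda>\<alpha>. c \<alpha> * multi_monomial \<alpha> (y - x)) has_sum f y) multi_indices"
    using assms unfolding real_analytic_at_iff_multi_monomial by blast
  show ?thesis unfolding real_analytic_at_iff_multi_monomial
  proof (intro exI[of _ r] conjI exI[of _ "\<lambda>\<alpha>. k * c \<alpha>"] ballI)
    fix y assume "y \<in> ball x r"
    then have "((\<lambda>\<alpha>. k * (c \<alpha> * multi_monomial \<alpha> (y - x))) has_sum (k * f y)) multi_indices"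
      using r by (intro has_sum_cmult_right) auto
    then show "((\<lambda>\<alpha>. (k * c \<alpha>) * multi_monomial \<alpha> (y - x)) has_sum (k * f y)) multi_indices"
      by (simp add: mult.assoc)
  qed (use r in auto)
qed

lemma real_analytic_at_sum:
  assumes "finite S" "\<And>j. j \<in> S \<Longrightarrow> real_analytic_at (f j) x"
  shows "real_analytic_at (\<lambda>y. \<Sum>j\<in>S. f j y) x"
  using assms
  by (induction S rule: finite_induct)
     (auto intro: real_analytic_at_add real_analytic_at_const[of 0, simplified])

text \<open>Multiplication by a coordinate centred at the expansion point shifts every exponent of that
  coordinate by one.\<close>
lemma real_analytic_at_mult_coordinate:
  assumes "real_analytic_at f z" "e \<in> Basis"
  shows "real_analytic_at (\<lambda>y. f y * ((y - z) \<bullet> e)) z"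
proof -
  obtain r c where r: "r > 0"
    "\<forall>y\<in>ball z r. ((\<lambda>\<alpha>. c \<alpha> * multi_monomial \<alpha> (y - z)) has_sum f y) multi_indices"
    using assms(1) unfolding real_analytic_at_iff_multi_monomial by blast
  define shift where "shift \<alpha> = \<alpha>(e := \<alpha> e + 1)" for \<alpha> :: "'a \<Rightarrow> nat"
  define c' where "c' \<beta> = (if 1 \<le> \<beta> e then c (\<beta>(e := \<beta> e - 1)) else 0)" for \<beta>
  have inj: "inj_on shift multi_indices"
    by (rule inj_onI) (metis add_right_cancel fun_upd_eqD fun_upd_idem_iff fun_upd_upd shift_def)
  have shift_mi: "shift ` multi_indices \<subseteq> multi_indices"
    using assms(2) by (auto simp: shift_def multi_indices_def)
  have monomial_shift: "multi_monomial (shift \<alpha>) w = multi_monomial \<alpha> w * (w \<bullet> e)" for \<alpha> w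
  proof -
    have "multi_monomial (shift \<alpha>) w = (\<Prod>b\<in>Basis. (w \<bullet> b) ^ \<alpha> b * (if b = e then w \<bullet> b else 1))"
      unfolding multi_monomial_def shift_def by (intro prod.cong) auto
    also have "\<dots> = multi_monomial \<alpha> w * (w \<bullet> e)"
      unfolding prod.distrib multi_monomial_def using assms(2) by (simp add: prod.delta)
    finally show ?thesis .
  qed
  have c'_shift: "c' (shift \<alpha>) = c \<alpha>" for \<alpha>
    by (simp add: c'_def shift_def)
  have c'_outside: "c' \<beta> = 0" if "\<beta> \<in> multi_indices - shift ` multi_indices" for \<beta>
  proof (rule ccontr)
    assume "c' \<beta> \<noteq> 0"
    then have "\<beta> = shift (\<beta>(e := \<beta> e - 1))"
      by (auto simp: shift_def c'_def split: if_splits)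
    moreover have "\<beta>(e := \<beta> e - 1) \<in> multi_indices"
      using that assms(2) by (auto simp: multi_indices_def)
    ultimately show False using that by blast
  qed
  show ?thesis unfolding real_analytic_at_iff_multi_monomial
  proof (intro exI[of _ r] conjI exI[of _ c'] ballI)
    fix y assume "y \<in> ball z r"
    then have "((\<lambda>\<alpha>. c \<alpha> * multi_monomial \<alpha> (y - z) * ((y - z) \<bullet> e))
        has_sum (f y * ((y - z) \<bullet> e))) multi_indices"
      using r by (intro has_sum_cmult_left) auto
    then have "(((\<lambda>\<beta>. c' \<beta> * multi_monomial \<beta> (y - z)) \<circ> shift)
        has_sum (f y * ((y - z) \<bullet> e))) multi_indices"
      by (simp add: o_def c'_shift monomial_shift mult.assoc)
    then show "((\<lambda>\<beta>. c' \<beta> * multi_monomial \<beta> (y - z)) has_sum (f y * ((y - z) \<bullet> e))) multi_indices"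
      by (rule has_sum_reindex_extend[OF inj shift_mi]) (simp add: c'_outside)
  qed (use r in auto)
qed

lemma real_analytic_at_fst:
  fixes f :: "'a::euclidean_space \<Rightarrow> real" and y0 :: "'b::euclidean_space"
  assumes "real_analytic_at f x"
  shows "real_analytic_at (\<lambda>p. f (fst p)) (x, y0)"
proof -
  obtain r c where r: "r > 0"
    "\<forall>y\<in>ball x r. ((\<lambda>\<alpha>. c \<alpha> * multi_monomial \<alpha> (y - x)) has_sum f y) multi_indices"
    using assms unfolding real_analytic_at_iff_multi_monomial by blast
  define lift where "lift \<alpha> = (\<lambda>p::'a \<times> 'b. if snd p = 0 then \<alpha> (fst p) else 0)" for \<alpha> :: "'a \<Rightarrow> nat"
  define c' where
    "c' \<beta> = (if \<forall>p::'a \<times> 'b. snd p \<noteq> 0 \<longrightarrow> \<beta> p = 0 then c (\<lambda>u. \<beta> (u, 0)) else 0)" for \<beta>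
  have Basis_fst: "(u, 0::'b) \<in> Basis \<longleftrightarrow> u \<in> Basis" for u :: 'a
    by (auto simp: Basis_prod_def)
  have inj: "inj_on lift multi_indices"
  proof (rule inj_onI)
    fix \<alpha>1 \<alpha>2 assume "lift \<alpha>1 = lift \<alpha>2"
    then have "lift \<alpha>1 (u, 0) = lift \<alpha>2 (u, 0)" for u by simp
    then show "\<alpha>1 = \<alpha>2" by (auto simp: lift_def)
  qed
  have lift_mi: "lift ` multi_indices \<subseteq> multi_indices"
    by (auto simp: lift_def multi_indices_def Basis_fst)
  have monomial_lift: "multi_monomial (lift \<alpha>) w = multi_monomial \<alpha> (fst w)" for \<alpha> w
  proof -
    have inj_pairs: "inj_on (\<lambda>u. (u::'a, 0::'b)) Basis" "inj_on (\<lambda>u. (0::'a, u::'b)) Basis"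
      by (auto intro!: inj_onI)
    have "multi_monomial (lift \<alpha>) w = (\<Prod>b\<in>(\<lambda>u. (u, 0)) ` Basis. (w \<bullet> b) ^ lift \<alpha> b) *
         (\<Prod>b\<in>(\<lambda>v. (0, v)) ` Basis. (w \<bullet> b) ^ lift \<alpha> b)"
      unfolding multi_monomial_def Basis_prod_def
      by (rule prod.union_disjoint) (auto simp: nonzero_Basis)
    also have "\<dots> = multi_monomial \<alpha> (fst w)"
      using inj_pairs
      by (simp add: prod.reindex multi_monomial_def lift_def inner_Pair_0 nonzero_Basis)
    finally show ?thesis .
  qed
  have c'_lift: "c' (lift \<alpha>) = c \<alpha>" for \<alpha>
    by (simp add: c'_def lift_def)
  have c'_outside: "c' \<beta> = 0" if "\<beta> \<in> multi_indices - lift ` multi_indices" for \<beta>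
  proof (rule ccontr)
    assume "c' \<beta> \<noteq> 0"
    then have "\<beta> = lift (\<lambda>u. \<beta> (u, 0))"
      by (auto simp: lift_def c'_def split: if_splits)
    moreover have "(\<lambda>u. \<beta> (u, 0)) \<in> multi_indices"
      using that by (auto simp: multi_indices_def Basis_fst)
    ultimately show False using that by blast
  qed
  show ?thesis unfolding real_analytic_at_iff_multi_monomial
  proof (intro exI[of _ r] conjI exI[of _ c'] ballI)
    fix q assume "q \<in> ball (x, y0) r"
    then have "fst q \<in> ball x r"
      using dist_fst_le[of "(x, y0)" q] by auto
    then have "((\<lambda>\<alpha>. c \<alpha> * multi_monomial \<alpha> (fst q - x)) has_sum f (fst q)) multi_indices"
      using r by auto
    then have "(((\<lambda>\<beta>. c' \<beta> * multi_monomial \<beta> (q - (x, y0))) \<circ> lift) has_sum f (fst q))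
        multi_indices"
      by (simp add: o_def c'_lift monomial_lift)
    then show "((\<lambda>\<beta>. c' \<beta> * multi_monomial \<beta> (q - (x, y0))) has_sum f (fst q)) multi_indices"
      by (rule has_sum_reindex_extend[OF inj lift_mi]) (simp add: c'_outside)
  qed (use r in auto)
qed

section \<open>Differentiability of real-analytic functions\<close>

definition affine_multi_indices :: "('a::euclidean_space \<Rightarrow> nat) set" where
  "affine_multi_indices = insert (\<lambda>_. 0) (multi_unit ` Basis)"

lemma affine_multi_indices_finite: "finite affine_multi_indices"
  by (simp add: affine_multi_indices_def)

lemma affine_multi_indices_subset: "affine_multi_indices \<subseteq> multi_indices"
  by (auto simp: affine_multi_indices_def zero_in_multi_indices multi_unit_in_multi_indices)

lemma multi_degree_ge_2:
  assumes "\<alpha> \<in> multi_indices - affine_multi_indices"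
  shows "2 \<le> multi_degree \<alpha>"
proof (rule ccontr)
  assume "\<not> 2 \<le> multi_degree \<alpha>"
  then have le1: "(\<Sum>b\<in>Basis. \<alpha> b) \<le> 1" by (simp add: multi_degree_def)
  have outside: "\<alpha> u = 0" if "u \<notin> Basis" for u
    using assms that by (auto simp: multi_indices_def)
  obtain b where b: "b \<in> Basis" "\<alpha> b \<noteq> 0"
    using assms outside by (metis DiffD2 affine_multi_indices_def ext insertI1)
  have "\<alpha> b + (\<Sum>u\<in>Basis - {b}. \<alpha> u) \<le> 1"
    using le1 b by (simp add: sum.remove)
  moreover have "\<alpha> b \<ge> 1" using b(2) by simp
  ultimately have "\<alpha> b = 1" "(\<Sum>u\<in>Basis - {b}. \<alpha> u) = 0"
    by linarith+
  then have "\<alpha> b = 1" "\<forall>u\<in>Basis - {b}. \<alpha> u = 0"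
    by simp_all
  then have "\<alpha> = multi_unit b"
    using outside by (auto simp: multi_unit_def fun_eq_iff)
  then show False using assms b by (simp add: affine_multi_indices_def)
qed

lemma sum_affine_multi_indices:
  "(\<Sum>\<alpha>\<in>affine_multi_indices. c \<alpha> * multi_monomial \<alpha> h) =
     c (\<lambda>_. 0) + (\<Sum>b\<in>Basis. c (multi_unit b) * (h \<bullet> b))"
proof -
  have inj: "inj_on multi_unit (Basis :: 'a set)"
  proof (rule inj_onI)
    fix a b :: 'a assume "multi_unit a = multi_unit b"
    then have "multi_unit a a = multi_unit b a" by simp
    then show "a = b" by (simp add: multi_unit_def split: if_splits)
  qed
  have "multi_unit b b \<noteq> (0::nat)" for b :: 'a
    by (simp add: multi_unit_def)
  then have "(\<lambda>_. 0) \<notin> multi_unit ` (Basis :: 'a set)"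
    by (metis imageE)
  then have "(\<Sum>\<alpha>\<in>affine_multi_indices. c \<alpha> * multi_monomial \<alpha> h) =
      c (\<lambda>_. 0) + (\<Sum>\<alpha>\<in>multi_unit ` Basis. c \<alpha> * multi_monomial \<alpha> h)"
    by (simp add: affine_multi_indices_def)
  also have "(\<Sum>\<alpha>\<in>multi_unit ` Basis. c \<alpha> * multi_monomial \<alpha> h) =
      (\<Sum>b\<in>Basis. c (multi_unit b) * multi_monomial (multi_unit b) h)"
    by (rule sum.reindex[OF inj, unfolded comp_def])
  also have "\<dots> = (\<Sum>b\<in>Basis. c (multi_unit b) * (h \<bullet> b))"
    by (intro sum.cong) (simp_all add: multi_monomial_unit)
  finally show ?thesis .
qed

lemma abs_multi_monomial_le: "\<bar>multi_monomial \<alpha> h\<bar> \<le> norm h ^ multi_degree \<alpha>"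
proof -
  have "\<bar>multi_monomial \<alpha> h\<bar> = (\<Prod>b\<in>Basis. \<bar>h \<bullet> b\<bar> ^ \<alpha> b)"
    by (simp add: multi_monomial_def abs_prod power_abs)
  also have "\<dots> \<le> (\<Prod>b\<in>Basis. norm h ^ \<alpha> b)"
    by (intro prod_mono conjI power_mono Basis_le_norm) auto
  finally show ?thesis by (simp add: multi_degree_def power_sum)
qed

lemma abs_multi_monomial_le_quadratic:
  assumes "2 \<le> multi_degree \<alpha>" "norm h \<le> \<rho>"
  shows "\<bar>multi_monomial \<alpha> h\<bar> \<le> \<rho> ^ (multi_degree \<alpha> - 2) * (norm h)\<^sup>2"
proof -
  have "multi_degree \<alpha> = (multi_degree \<alpha> - 2) + 2" using assms(1) by simp
  then have "norm h ^ multi_degree \<alpha> = norm h ^ (multi_degree \<alpha> - 2) * (norm h)\<^sup>2"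
    by (metis power_add)
  also have "\<dots> \<le> \<rho> ^ (multi_degree \<alpha> - 2) * (norm h)\<^sup>2"
    using assms(2) by (intro mult_right_mono power_mono) auto
  finally show ?thesis using abs_multi_monomial_le order_trans by blast
qed

lemma multi_monomial_diagonal:
  "multi_monomial \<alpha> (\<Sum>b\<in>Basis. \<rho> *\<^sub>R b) = \<rho> ^ multi_degree \<alpha>"
  unfolding multi_monomial_def multi_degree_def power_sum
  by (intro prod.cong) (auto simp: inner_sum_left inner_Basis if_distrib sum.delta cong: if_cong)

text \<open>Convergence at the diagonal point with all coordinates \<open>\<rho>\<close> gives absolute convergence of
  the majorant series.\<close>
lemma power_series_abs_summable:
  fixes c :: "('a::euclidean_space \<Rightarrow> nat) \<Rightarrow> real"
  assumes "r > 0"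
    and "\<forall>y\<in>ball x r. ((\<lambda>\<alpha>. c \<alpha> * multi_monomial \<alpha> (y - x)) has_sum f y) multi_indices"
  obtains \<rho> where "0 < \<rho>" "\<rho> < r"
    "(\<lambda>\<alpha>. \<bar>c \<alpha>\<bar> * \<rho> ^ multi_degree \<alpha>) summable_on multi_indices"
proof
  define n where "n = real DIM('a)"
  have n: "n \<ge> 1" unfolding n_def using DIM_positive[where 'a='a] by linarith
  define \<rho> where "\<rho> = r / (2 * n)"
  show \<rho>: "0 < \<rho>" using assms(1) n by (simp add: \<rho>_def)
  have n\<rho>: "n * \<rho> < r" using assms(1) n by (simp add: \<rho>_def)
  moreover have "\<rho> \<le> n * \<rho>" using n \<rho> by simp
  ultimately show "\<rho> < r" by linarith
  define z where "z = (\<Sum>b\<in>(Basis::'a set). \<rho> *\<^sub>R b)"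
  have "norm z \<le> (\<Sum>b\<in>(Basis::'a set). norm (\<rho> *\<^sub>R b))"
    unfolding z_def by (rule norm_sum)
  also have "\<dots> = n * \<rho>" using \<rho> by (simp add: n_def)
  finally have "x + z \<in> ball x r" using n\<rho> by (simp add: dist_norm)
  from bspec[OF assms(2) this]
  have "((\<lambda>\<alpha>. c \<alpha> * \<rho> ^ multi_degree \<alpha>) has_sum f (x + z)) multi_indices"
    by (simp add: z_def multi_monomial_diagonal)
  then have "(\<lambda>\<alpha>. norm (c \<alpha> * \<rho> ^ multi_degree \<alpha>)) summable_on multi_indices"
    by (simp only: summable_on_iff_abs_summable_on_real[symmetric] has_sum_imp_summable)
  then show "(\<lambda>\<alpha>. \<bar>c \<alpha>\<bar> * \<rho> ^ multi_degree \<alpha>) summable_on multi_indices"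
    using \<rho> by (simp add: abs_mult)
qed

lemma has_derivative_quadratic_remainder:
  fixes f :: "'a::real_normed_vector \<Rightarrow> real"
  assumes "bounded_linear D" "\<rho> > 0"
    and "\<And>h. norm h < \<rho> \<Longrightarrow> \<bar>f (x + h) - f x - D h\<bar> \<le> K * (norm h)\<^sup>2"
  shows "(f has_derivative D) (at x)"
proof -
  have "\<forall>\<^sub>F y in at x. norm (norm (f y - f x - D (y - x)) / norm (y - x)) \<le> K * norm (y - x)"
    unfolding eventually_at
  proof (intro exI[of _ \<rho>] conjI ballI impI assms(2))
    fix y assume "y \<noteq> x \<and> dist y x < \<rho>"
    then have "norm (y - x) > 0" "norm (y - x) < \<rho>" by (auto simp: dist_norm)
    with assms(3)[of "y - x"] show "norm (norm (f y - f x - D (y - x)) / norm (y - x)) \<le> K * norm (y - x)"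
      by (simp add: divide_le_eq power2_eq_square mult.assoc)
  qed
  moreover have "((\<lambda>y. K * norm (y - x)) \<longlongrightarrow> 0) (at x)"
    by (intro tendsto_mult_right_zero tendsto_norm_zero LIM_zero tendsto_ident_at)
  ultimately have "((\<lambda>y. norm (f y - f x - D (y - x)) / norm (y - x)) \<longlongrightarrow> 0) (at x)"
    by (rule Lim_null_comparison)
  with assms(1) show ?thesis
    unfolding has_derivative_iff_norm by blast
qed

lemma tail_majorant_summable:
  fixes c :: "('a::euclidean_space \<Rightarrow> nat) \<Rightarrow> real"
  assumes "(\<lambda>\<alpha>. \<bar>c \<alpha>\<bar> * \<rho> ^ multi_degree \<alpha>) summable_on multi_indices" "\<rho> > 0"
  shows "(\<lambda>\<alpha>. \<bar>c \<alpha>\<bar> * \<rho> ^ (multi_degree \<alpha> - 2)) summable_on (multi_indices - affine_multi_indices)"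
proof -
  have eq: "\<bar>c \<alpha>\<bar> * \<rho> ^ multi_degree \<alpha> * (1 / \<rho>\<^sup>2) = \<bar>c \<alpha>\<bar> * \<rho> ^ (multi_degree \<alpha> - 2)"
    if "\<alpha> \<in> multi_indices - affine_multi_indices" for \<alpha>
    using multi_degree_ge_2[OF that] assms(2) by (simp add: power_diff)
  have "(\<lambda>\<alpha>. \<bar>c \<alpha>\<bar> * \<rho> ^ multi_degree \<alpha> * (1 / \<rho>\<^sup>2)) summable_on (multi_indices - affine_multi_indices)"
    by (intro summable_on_cmult_left summable_on_subset_banach[OF assms(1)]) auto
  moreover have "(\<lambda>\<alpha>. \<bar>c \<alpha>\<bar> * \<rho> ^ multi_degree \<alpha> * (1 / \<rho>\<^sup>2)) summable_on (multi_indices - affine_multi_indices)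
      \<longleftrightarrow> (\<lambda>\<alpha>. \<bar>c \<alpha>\<bar> * \<rho> ^ (multi_degree \<alpha> - 2)) summable_on (multi_indices - affine_multi_indices)"
    by (rule summable_on_cong) (rule eq)
  ultimately show ?thesis by blast
qed

lemma power_series_quadratic_remainder:
  fixes c :: "('a::euclidean_space \<Rightarrow> nat) \<Rightarrow> real"
  assumes "((\<lambda>\<alpha>. c \<alpha> * multi_monomial \<alpha> h) has_sum y) multi_indices" "norm h \<le> \<rho>"
    and "(\<lambda>\<alpha>. \<bar>c \<alpha>\<bar> * \<rho> ^ (multi_degree \<alpha> - 2)) summable_on (multi_indices - affine_multi_indices)"
  shows "\<bar>y - c (\<lambda>_. 0) - (\<Sum>b\<in>Basis. c (multi_unit b) * (h \<bullet> b))\<bar>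
    \<le> infsum (\<lambda>\<alpha>. \<bar>c \<alpha>\<bar> * \<rho> ^ (multi_degree \<alpha> - 2)) (multi_indices - affine_multi_indices) * (norm h)\<^sup>2"
proof -
  let ?T = "multi_indices - affine_multi_indices"
  from has_sum_Diff[OF assms(1) has_sum_finite[OF affine_multi_indices_finite] affine_multi_indices_subset]
  have "((\<lambda>\<alpha>. c \<alpha> * multi_monomial \<alpha> h) has_sum
      (y - (c (\<lambda>_. 0) + (\<Sum>b\<in>Basis. c (multi_unit b) * (h \<bullet> b))))) ?T"
    by (simp add: sum_affine_multi_indices)
  moreover have "((\<lambda>\<alpha>. \<bar>c \<alpha>\<bar> * \<rho> ^ (multi_degree \<alpha> - 2) * (norm h)\<^sup>2) has_sum
      (infsum (\<lambda>\<alpha>. \<bar>c \<alpha>\<bar> * \<rho> ^ (multi_degree \<alpha> - 2)) ?T * (norm h)\<^sup>2)) ?T"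
    using assms(3) by (intro has_sum_cmult_left) simp
  moreover have "norm (c \<alpha> * multi_monomial \<alpha> h) \<le> \<bar>c \<alpha>\<bar> * \<rho> ^ (multi_degree \<alpha> - 2) * (norm h)\<^sup>2"
    if "\<alpha> \<in> ?T" for \<alpha>
  proof -
    have "\<bar>multi_monomial \<alpha> h\<bar> \<le> \<rho> ^ (multi_degree \<alpha> - 2) * (norm h)\<^sup>2"
      using multi_degree_ge_2[OF that] assms(2) by (rule abs_multi_monomial_le_quadratic)
    then show ?thesis
      by (simp add: abs_mult mult.assoc mult_left_mono)
  qed
  ultimately show ?thesis
    using norm_infsum_le by fastforce
qed

lemma real_analytic_at_has_derivative:
  fixes f :: "'a::euclidean_space \<Rightarrow> real"
  assumes "real_analytic_at f x"
  obtains D where "(f has_derivative D) (at x)"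
proof -
  obtain r c where r: "r > 0"
    and expansion: "\<forall>y\<in>ball x r. ((\<lambda>\<alpha>. c \<alpha> * multi_monomial \<alpha> (y - x)) has_sum f y) multi_indices"
    using assms unfolding real_analytic_at_iff_multi_monomial by blast
  obtain \<rho> where \<rho>: "0 < \<rho>" "\<rho> < r"
    and summable: "(\<lambda>\<alpha>. \<bar>c \<alpha>\<bar> * \<rho> ^ multi_degree \<alpha>) summable_on multi_indices"
    using power_series_abs_summable[OF r expansion] by blast
  define D where "D h = (\<Sum>b\<in>Basis. c (multi_unit b) * (h \<bullet> b))" for h :: 'a
  define K where "K = infsum (\<lambda>\<alpha>. \<bar>c \<alpha>\<bar> * \<rho> ^ (multi_degree \<alpha> - 2)) (multi_indices - affine_multi_indices)"
  have remainder: "\<bar>f (x + h) - c (\<lambda>_. 0) - D h\<bar> \<le> K * (norm h)\<^sup>2" if "norm h < \<rho>" for h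
    unfolding D_def K_def
    using bspec[OF expansion, of "x + h"] that \<rho>(2)
    by (intro power_series_quadratic_remainder tail_majorant_summable[OF summable \<rho>(1)])
       (simp_all add: dist_norm)
  have "f x = c (\<lambda>_. 0)"
    using remainder[of 0] \<rho> by (simp add: D_def)
  moreover have "bounded_linear D"
    unfolding D_def by (intro bounded_linear_intros)
  ultimately have "(f has_derivative D) (at x)"
    using remainder \<rho>(1) by (intro has_derivative_quadratic_remainder) auto
  then show thesis by (rule that)
qed

section \<open>Linear systems with varying coefficients\<close>

lemma dim_orthogonal_complement:
  fixes S :: "'a::euclidean_space set"
  shows "dim {x. \<forall>w\<in>S. w \<bullet> x = 0} + dim S = DIM('a)"
proof -
  have "{y. \<forall>x\<in>span S. orthogonal x y} = {x. \<forall>w\<in>S. w \<bullet> x = 0}"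
    by (auto simp: orthogonal_def inner_commute dest: span_base
        intro: orthogonal_to_span[unfolded orthogonal_def])
  then show ?thesis
    using dim_subspace_orthogonal_to_vectors[of "span S" UNIV] by simp
qed

lemma subspace_orthogonal_complement: "subspace {x. \<forall>w\<in>S. w \<bullet> x = 0}"
  by (auto simp: subspace_def inner_add_right)

lemma aff_dim_linear_system:
  fixes u :: "'i \<Rightarrow> 'a::euclidean_space"
  assumes "t1 \<in> {t. \<forall>i\<in>I. u i \<bullet> t = c i}"
  shows "aff_dim {t. \<forall>i\<in>I. u i \<bullet> t = c i} = int (dim {x. \<forall>w\<in>u ` I. w \<bullet> x = 0})"
proof -
  have "{t. \<forall>i\<in>I. u i \<bullet> t = c i} = (+) t1 ` {x. \<forall>w\<in>u ` I. w \<bullet> x = 0}"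
  proof (intro set_eqI iffI)
    fix t assume "t \<in> {t. \<forall>i\<in>I. u i \<bullet> t = c i}"
    then show "t \<in> (+) t1 ` {x. \<forall>w\<in>u ` I. w \<bullet> x = 0}"
      using assms by (intro image_eqI[of _ _ "t - t1"]) (auto simp: inner_diff_right)
  qed (use assms in \<open>auto simp: inner_add_right\<close>)
  then show ?thesis
    using aff_dim_subspace[OF subspace_orthogonal_complement[of "u ` I"]]
    by (simp add: aff_dim_translation_eq)
qed

lemma dim_rows_add_aff_dim_solutions:
  fixes u :: "'i \<Rightarrow> 'a::euclidean_space"
  assumes "aff_dim {t. \<forall>i\<in>I. u i \<bullet> t = c i} = int k"
  shows "dim (u ` I) + k = DIM('a)" and "\<exists>t. \<forall>i\<in>I. u i \<bullet> t = c i"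
proof -
  show "\<exists>t. \<forall>i\<in>I. u i \<bullet> t = c i"
  proof (rule ccontr)
    assume "\<nexists>t. \<forall>i\<in>I. u i \<bullet> t = c i"
    then have "{t. \<forall>i\<in>I. u i \<bullet> t = c i} = {}" by blast
    with assms show False by simp
  qed
  then obtain t1 where "t1 \<in> {t. \<forall>i\<in>I. u i \<bullet> t = c i}" by blast
  from aff_dim_linear_system[OF this] assms
  have "dim {x. \<forall>w\<in>u ` I. w \<bullet> x = 0} = k" by simp
  then show "dim (u ` I) + k = DIM('a)"
    using dim_orthogonal_complement[of "u ` I"] by simp
qed

lemma inner_eq_on_span:
  assumes "u \<in> span S" "\<forall>w\<in>S. w \<bullet> t = w \<bullet> t'"
  shows "u \<bullet> t = u \<bullet> t'"
proof -
  have "orthogonal (t - t') u"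
    by (rule orthogonal_to_span[OF assms(1)])
       (use assms(2) in \<open>simp add: orthogonal_def inner_diff_left inner_diff_right inner_commute\<close>)
  then show ?thesis by (simp add: orthogonal_def inner_diff_left inner_diff_right inner_commute)
qed

lemma independent_family_coefficients_zero:
  fixes u :: "'i \<Rightarrow> 'a::euclidean_space"
  assumes "inj_on u I" "independent (u ` I)" "(\<Sum>i\<in>I. c i *\<^sub>R u i) = 0" "i \<in> I"
  shows "c i = 0"
proof -
  define g where "g w = c (the_inv_into I u w)" for w
  have "(\<Sum>w\<in>u ` I. g w *\<^sub>R w) = (\<Sum>i\<in>I. g (u i) *\<^sub>R u i)"
    by (rule sum.reindex[OF assms(1), unfolded comp_def])
  also have "\<dots> = 0"
    using assms(3) by (simp add: g_def the_inv_into_f_f[OF assms(1)])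
  finally have "g (u i) = 0"
    using assms(2,4) unfolding independent_explicit by blast
  then show ?thesis by (simp add: g_def the_inv_into_f_f[OF assms(1) assms(4)])
qed

lemma exists_independent_subfamily:
  fixes u :: "'i \<Rightarrow> 'a::euclidean_space"
  obtains I where "I \<subseteq> S" "inj_on u I" "independent (u ` I)" "span (u ` I) = span (u ` S)"
proof -
  obtain B where B: "B \<subseteq> u ` S" "independent B" "u ` S \<subseteq> span B"
    using maximal_independent_subset by blast
  have "u ` {i\<in>S. u i \<in> B} = B"
    using B(1) by auto
  moreover have "countable B"
    using B(2) independent_bound countable_finite by blast
  ultimately obtain I where I: "I \<subseteq> {i\<in>S. u i \<in> B}" "u ` I = B" "inj_on u I"
    using countable_image_eq_inj[of u "{i\<in>S. u i \<in> B}"] by auto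
  moreover have "span B = span (u ` S)"
    using B by (metis span_eq span_superset subset_trans)
  ultimately show thesis using B(2) by (intro that[of I]) auto
qed

lemma span_family_norm_lower_bound:
  fixes u :: "'i \<Rightarrow> 'a::euclidean_space"
  assumes "finite I"
  obtains e where "e > 0" "\<forall>x\<in>span (u ` I). e * norm x \<le> norm (\<Sum>i\<in>I. (u i \<bullet> x) *\<^sub>R u i)"
proof -
  have linear: "bounded_linear (\<lambda>x. \<Sum>i\<in>I. (u i \<bullet> x) *\<^sub>R u i)"
    by (intro bounded_linear_intros)
  have "x = 0" if x: "x \<in> span (u ` I)" "(\<Sum>i\<in>I. (u i \<bullet> x) *\<^sub>R u i) = 0" for x
  proof -
    have "(\<Sum>i\<in>I. (u i \<bullet> x)\<^sup>2) = x \<bullet> (\<Sum>i\<in>I. (u i \<bullet> x) *\<^sub>R u i)"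
      by (simp add: inner_sum_right inner_commute power2_eq_square)
    then have "\<forall>i\<in>I. u i \<bullet> x = 0"
      using x(2) assms by (simp add: sum_nonneg_eq_0_iff)
    then have "orthogonal x x"
      using orthogonal_to_span[OF x(1), of x] by (force simp: orthogonal_def inner_commute)
    then show "x = 0" by (simp add: orthogonal_def)
  qed
  then show thesis
    using injective_imp_isometric[OF closed_subspace subspace_span linear] that by blast
qed

text \<open>On vectors orthogonal to the perturbed rows, the inner products with the original rows are
  small, which is incompatible with the lower bound on their span.\<close>
lemma orthogonal_complement_perturbed_inter_span:
  fixes u u0 :: "'i \<Rightarrow> 'a::euclidean_space"
  assumes bound: "\<forall>x\<in>span (u0 ` I). e * norm x \<le> norm (\<Sum>i\<in>I. (u0 i \<bullet> x) *\<^sub>R u0 i)"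
    and small: "(\<Sum>i\<in>I. norm (u i - u0 i) * norm (u0 i)) < e"
  shows "{x. \<forall>w\<in>u ` I. w \<bullet> x = 0} \<inter> span (u0 ` I) \<subseteq> {0}"
proof
  fix x assume x: "x \<in> {x. \<forall>w\<in>u ` I. w \<bullet> x = 0} \<inter> span (u0 ` I)"
  have "e * norm x \<le> norm (\<Sum>i\<in>I. (u0 i \<bullet> x) *\<^sub>R u0 i)"
    using bound x by blast
  also have "\<dots> = norm (\<Sum>i\<in>I. ((u0 i - u i) \<bullet> x) *\<^sub>R u0 i)"
    using x by (simp add: inner_diff_left)
  also have "\<dots> \<le> (\<Sum>i\<in>I. norm x * (norm (u i - u0 i) * norm (u0 i)))"
  proof (intro sum_norm_le)
    fix i
    have "\<bar>(u0 i - u i) \<bullet> x\<bar> \<le> norm (u i - u0 i) * norm x"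
      by (metis Cauchy_Schwarz_ineq2 norm_minus_commute)
    then have "\<bar>(u0 i - u i) \<bullet> x\<bar> * norm (u0 i) \<le> norm (u i - u0 i) * norm x * norm (u0 i)"
      by (rule mult_right_mono) simp
    then show "norm (((u0 i - u i) \<bullet> x) *\<^sub>R u0 i) \<le> norm x * (norm (u i - u0 i) * norm (u0 i))"
      by (simp add: mult_ac)
  qed
  also have "\<dots> = norm x * (\<Sum>i\<in>I. norm (u i - u0 i) * norm (u0 i))"
    by (simp add: sum_distrib_left)
  finally have le: "norm x * e \<le> norm x * (\<Sum>i\<in>I. norm (u i - u0 i) * norm (u0 i))"
    by (simp add: mult.commute)
  show "x \<in> {0}"
  proof (rule ccontr)
    assume "x \<notin> {0}"
    then have "e \<le> (\<Sum>i\<in>I. norm (u i - u0 i) * norm (u0 i))"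
      using le mult_le_cancel_left_pos[of "norm x"] by simp
    with small show False by simp
  qed
qed

lemma eventually_independent_family:
  fixes u :: "'i \<Rightarrow> 'b \<Rightarrow> 'a::euclidean_space"
  assumes "finite I" "inj_on u0 I" "independent (u0 ` I)"
    and "\<And>i. i \<in> I \<Longrightarrow> ((\<lambda>x. u i x) \<longlongrightarrow> u0 i) F"
  shows "\<forall>\<^sub>F x in F. dim ((\<lambda>i. u i x) ` I) = card I"
proof -
  obtain e where e: "e > 0" "\<forall>x\<in>span (u0 ` I). e * norm x \<le> norm (\<Sum>i\<in>I. (u0 i \<bullet> x) *\<^sub>R u0 i)"
    using span_family_norm_lower_bound[OF assms(1)] by blast
  have "((\<lambda>x. \<Sum>i\<in>I. norm (u i x - u0 i) * norm (u0 i)) \<longlongrightarrow> (\<Sum>i\<in>I. norm (u0 i - u0 i) * norm (u0 i))) F"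
    using assms(4) by (intro tendsto_intros) auto
  then have "\<forall>\<^sub>F x in F. (\<Sum>i\<in>I. norm (u i x - u0 i) * norm (u0 i)) < e"
    using e(1) by (simp add: order_tendstoD(2))
  then show ?thesis
  proof (rule eventually_mono)
    fix x assume "(\<Sum>i\<in>I. norm (u i x - u0 i) * norm (u0 i)) < e"
    then have trivial: "dim ({y. \<forall>w\<in>(\<lambda>i. u i x) ` I. w \<bullet> y = 0} \<inter> span (u0 ` I)) = 0"
      using orthogonal_complement_perturbed_inter_span[OF e(2)] by simp
    have "dim {y. \<forall>w\<in>(\<lambda>i. u i x) ` I. w \<bullet> y = 0} + dim (span (u0 ` I)) \<le> DIM('a)"
      using dim_sums_Int[OF subspace_orthogonal_complement[of "(\<lambda>i. u i x) ` I"] subspace_span[of "u0 ` I"]]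
        trivial dim_subset_UNIV[of "{y + z |y z. y \<in> {y. \<forall>w\<in>(\<lambda>i. u i x) ` I. w \<bullet> y = 0} \<and> z \<in> span (u0 ` I)}"]
      by linarith
    moreover have "dim (span (u0 ` I)) = card I"
      using assms(2,3) by (simp add: dim_eq_card_independent card_image)
    ultimately have "card I \<le> dim ((\<lambda>i. u i x) ` I)"
      using dim_orthogonal_complement[of "(\<lambda>i. u i x) ` I"] by linarith
    moreover have "dim ((\<lambda>i. u i x) ` I) \<le> card I"
      using dim_le_card'[of "(\<lambda>i. u i x) ` I"] card_image_le[OF assms(1), of "\<lambda>i. u i x"] assms(1)
      by simp
    ultimately show "dim ((\<lambda>i. u i x) ` I) = card I" by simp
  qed
qed

lemma constant_rank_redundant_equations:
  fixes v :: "'i \<Rightarrow> 'b::topological_space \<Rightarrow> 'a::euclidean_space"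
  assumes cont: "\<And>i. i \<in> S \<Longrightarrow> ((\<lambda>s. v i s) \<longlongrightarrow> v i s0) (nhds s0)"
    and rank: "\<forall>\<^sub>F s in nhds s0. dim ((\<lambda>i. v i s) ` S) = dim ((\<lambda>i. v i s0) ` S)"
    and consistent: "\<forall>\<^sub>F s in nhds s0. \<exists>t. \<forall>i\<in>S. v i s \<bullet> t = c i s"
  obtains I where "I \<subseteq> S" "inj_on (\<lambda>i. v i s0) I" "independent ((\<lambda>i. v i s0) ` I)"
    "\<forall>\<^sub>F s in nhds s0. \<forall>t. (\<forall>i\<in>I. v i s \<bullet> t = c i s) \<longrightarrow> (\<forall>i\<in>S. v i s \<bullet> t = c i s)"
proof -
  obtain I where I: "I \<subseteq> S" "inj_on (\<lambda>i. v i s0) I" "independent ((\<lambda>i. v i s0) ` I)"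
    "span ((\<lambda>i. v i s0) ` I) = span ((\<lambda>i. v i s0) ` S)"
    using exists_independent_subfamily by blast
  have "finite I"
    using I(2,3) independent_bound finite_image_iff by blast
  then have "\<forall>\<^sub>F s in nhds s0. dim ((\<lambda>i. v i s) ` I) = card I"
    using I cont by (intro eventually_independent_family) auto
  with rank consistent
  have "\<forall>\<^sub>F s in nhds s0. \<forall>t. (\<forall>i\<in>I. v i s \<bullet> t = c i s) \<longrightarrow> (\<forall>i\<in>S. v i s \<bullet> t = c i s)"
  proof eventually_elim
    case (elim s)
    have "card I = dim ((\<lambda>i. v i s0) ` S)"
      using I by (metis card_image dim_eq_card_independent dim_span)
    then have "span ((\<lambda>i. v i s) ` I) = span ((\<lambda>i. v i s) ` S)"
      using elim I(1) by (intro dim_eq_span) auto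
    moreover obtain t1 where t1: "\<forall>i\<in>S. v i s \<bullet> t1 = c i s"
      using elim by blast
    ultimately show ?case
    proof (intro allI impI ballI)
      fix t i assume span: "span ((\<lambda>i. v i s) ` I) = span ((\<lambda>i. v i s) ` S)"
        and t: "\<forall>i\<in>I. v i s \<bullet> t = c i s" and i: "i \<in> S"
      have "v i s \<in> span ((\<lambda>i. v i s) ` I)"
        using span i by (simp add: span_base)
      moreover have "\<forall>w\<in>(\<lambda>i. v i s) ` I. w \<bullet> t = w \<bullet> t1"
        using t t1 I(1) by auto
      ultimately have "v i s \<bullet> t = v i s \<bullet> t1"
        by (rule inner_eq_on_span)
      then show "v i s \<bullet> t = c i s" using t1 i by simp
    qed
  qed
  with I show thesis by (intro that) auto
qed

section \<open>Ordinary zeros of affine families\<close>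

lemma ordinary_zero_subfamilyI:
  fixes L :: "nat \<Rightarrow> 'a::euclidean_space \<Rightarrow> real"
  assumes analytic: "\<And>i. i < M \<Longrightarrow> real_analytic_at (L i) y0" "\<And>i. i < M \<Longrightarrow> L i y0 = 0"
    and I: "I \<subseteq> {..<M}"
    and deriv: "\<And>i. i \<in> I \<Longrightarrow> (L i has_derivative D i) (at y0)"
    and rank: "\<And>c. \<forall>b\<in>Basis. (\<Sum>i\<in>I. c i * D i b) = 0 \<Longrightarrow> \<forall>i\<in>I. c i = 0"
    and redundant: "\<forall>\<^sub>F y in nhds y0. (\<forall>i\<in>I. L i y = 0) \<longrightarrow> (\<forall>i<M. L i y = 0)"
  shows "ordinary_zero {L i |i. i < M} y0"
proof -
  define idx where "idx = sorted_list_of_set I"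
  have "finite I" using I finite_nat_iff_bounded by blast
  then have idx: "set idx = I" "distinct idx"
    by (auto simp: idx_def)
  have bij: "bij_betw (nth idx) {..<length idx} I"
    using idx by (intro bij_betw_nth) auto
  note reindex = sum.reindex_bij_betw[OF bij]
  have independent: "\<forall>k<length idx. c k = 0"
    if "\<forall>b\<in>Basis. (\<Sum>k<length idx. c k * D (idx ! k) b) = 0" for c
  proof -
    define c' where "c' i = c (the_inv_into {..<length idx} (nth idx) i)" for i
    have inv: "the_inv_into {..<length idx} (nth idx) (idx ! k) = k" if "k < length idx" for k
      using that bij_betw_imp_inj_on[OF bij] by (simp add: the_inv_into_f_f)
    have "\<forall>i\<in>I. c' i = 0"
      using that by (intro rank) (simp add: reindex[symmetric] c'_def inv)
    show ?thesis
    proof (intro allI impI)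
      fix k assume k: "k < length idx"
      then have "c' (idx ! k) = 0"
        using \<open>\<forall>i\<in>I. c' i = 0\<close> idx(1) by auto
      then show "c k = 0" by (simp add: c'_def inv k)
    qed
  qed
  obtain U where U: "open U" "y0 \<in> U" "\<forall>y\<in>U. (\<forall>i\<in>I. L i y = 0) \<longrightarrow> (\<forall>i<M. L i y = 0)"
    using redundant unfolding eventually_nhds by blast
  have "(\<forall>k<length idx. (map L idx ! k) y = 0) \<longleftrightarrow> (\<forall>i\<in>I. L i y = 0)" for y
    by (simp add: all_set_conv_all_nth idx(1)[symmetric])
  moreover have "(\<forall>f\<in>{L i |i. i < M}. f y = 0) \<longleftrightarrow> (\<forall>i<M. L i y = 0)" for y
    by blast
  ultimately have "{y\<in>U. \<forall>f\<in>{L i |i. i < M}. f y = 0} = {y\<in>U. \<forall>k<length idx. (map L idx ! k) y = 0}"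
    using U(3) I by auto
  then show ?thesis
    unfolding ordinary_zero_def
    using analytic I deriv independent U(1,2) idx(1)
    by (intro conjI exI[of _ "map L idx"] exI[of _ "map D idx"]) auto
qed

lemma has_derivative_along_line:
  assumes "(f has_derivative D) (at x)" "\<And>h. f (x + h *\<^sub>R d) = f x + h * a"
  shows "D d = a"
proof -
  have "((\<lambda>h. x + h *\<^sub>R d) has_derivative (\<lambda>h. h *\<^sub>R d)) (at 0)"
    by (intro derivative_eq_intros) auto
  moreover have "(f has_derivative D) (at (x + 0 *\<^sub>R d))"
    using assms(1) by simp
  ultimately have "((\<lambda>h. f (x + h *\<^sub>R d)) has_derivative (\<lambda>h. D (h *\<^sub>R d))) (at 0)"
    by (rule has_derivative_compose)
  then have "((\<lambda>h. f x + h * a) has_derivative (\<lambda>h. D (h *\<^sub>R d))) (at 0)"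
    by (simp only: assms(2))
  moreover have "((\<lambda>h. f x + h * a) has_derivative (\<lambda>h. h * a)) (at 0)"
    by (intro derivative_eq_intros) auto
  ultimately have "(\<lambda>h. D (h *\<^sub>R d)) = (\<lambda>h. h * a)"
    by (rule has_derivative_unique)
  from fun_cong[OF this, of 1] show ?thesis by simp
qed

lemma real_analytic_at_linear_system:
  fixes V :: "'j::finite \<Rightarrow> 'a::euclidean_space \<Rightarrow> real"
  assumes "\<And>j. real_analytic_at (V j) s0" "real_analytic_at b s0"
  shows "real_analytic_at (\<lambda>(s, t::real^'j). (\<Sum>j\<in>UNIV. V j s * t $ j) - b s) (s0, t0)"
proof -
  have "(\<lambda>(s, t::real^'j). (\<Sum>j\<in>UNIV. V j s * t $ j) - b s) =
    (\<lambda>p. (\<Sum>j\<in>UNIV. t0 $ j * V j (fst p) + V j (fst p) * ((p - (s0, t0)) \<bullet> (0, axis j 1)))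
       + (-1) * b (fst p))"
  proof (intro ext)
    fix p :: "'a \<times> (real^'j)"
    obtain s t where p: "p = (s, t)" by (cases p)
    have "(\<Sum>j\<in>UNIV. t0 $ j * V j s + V j s * ((p - (s0, t0)) \<bullet> (0, axis j 1))) =
        (\<Sum>j\<in>UNIV. V j s * t $ j)"
      by (intro sum.cong) (simp_all add: p inner_axis algebra_simps)
    then show "(case p of (s, t) \<Rightarrow> (\<Sum>j\<in>UNIV. V j s * t $ j) - b s) =
      (\<Sum>j\<in>UNIV. t0 $ j * V j (fst p) + V j (fst p) * ((p - (s0, t0)) \<bullet> (0, axis j 1)))
        + (-1) * b (fst p)"
      by (simp add: p algebra_simps)
  qed
  moreover have "(0, axis j 1) \<in> (Basis :: ('a \<times> (real^'j)) set)" for j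
    by (simp add: Basis_prod_def)
  ultimately show ?thesis
    by (simp only:)
       (intro real_analytic_at_add real_analytic_at_sum real_analytic_at_cmult
         real_analytic_at_mult_coordinate real_analytic_at_fst assms; simp)
qed

lemma has_derivative_affine_in_second:
  fixes v :: "'a::real_normed_vector \<Rightarrow> 'b::real_inner"
  assumes "((\<lambda>(s, t). v s \<bullet> t - c s) has_derivative D) (at (s0, t0))"
  shows "D (0, e) = v s0 \<bullet> e"
  by (rule has_derivative_along_line[OF assms]) (simp add: inner_add_right algebra_simps)

lemma rows_independent_in_second_block:
  fixes u :: "'i \<Rightarrow> 'b::euclidean_space" and D :: "'i \<Rightarrow> 'a::euclidean_space \<times> 'b \<Rightarrow> real"
  assumes "inj_on u I" "independent (u ` I)" "\<And>i e. i \<in> I \<Longrightarrow> D i (0, e) = u i \<bullet> e"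
    and "\<forall>e\<in>Basis. (\<Sum>i\<in>I. c i * D i e) = 0"
  shows "\<forall>i\<in>I. c i = 0"
proof -
  have "(\<Sum>i\<in>I. c i *\<^sub>R u i) \<bullet> e = 0" if "e \<in> Basis" for e
  proof -
    have "(\<Sum>i\<in>I. c i *\<^sub>R u i) \<bullet> e = (\<Sum>i\<in>I. c i * D i (0, e))"
      using assms(3) by (simp add: inner_sum_left)
    also have "\<dots> = 0"
      using assms(4) that by (simp add: Basis_prod_def)
    finally show ?thesis .
  qed
  then have "(\<Sum>i\<in>I. c i *\<^sub>R u i) = 0"
    by (rule euclidean_eqI[where y = 0, simplified])
  then show ?thesis
    using independent_family_coefficients_zero[OF assms(1,2)] by blast
qed

lemma ordinary_zero_affine_family:
  fixes v :: "nat \<Rightarrow> 'a::euclidean_space \<Rightarrow> 'b::euclidean_space" and b :: "nat \<Rightarrow> 'a \<Rightarrow> real"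
  assumes analytic: "\<And>i. i < M \<Longrightarrow> real_analytic_at (\<lambda>(s, t). v i s \<bullet> t - b i s) (s0, t0)"
    and vanish: "\<And>i. i < M \<Longrightarrow> v i s0 \<bullet> t0 = b i s0"
    and cont: "\<And>i. i < M \<Longrightarrow> ((\<lambda>s. v i s) \<longlongrightarrow> v i s0) (nhds s0)"
    and fibres: "\<forall>\<^sub>F s in nhds s0. aff_dim {t. \<forall>i\<in>{..<M}. v i s \<bullet> t = b i s} = int \<kappa>"
  shows "ordinary_zero {(\<lambda>(s, t). v i s \<bullet> t - b i s) | i. i < M} (s0, t0)"
proof -
  define L where "L i = (\<lambda>(s, t). v i s \<bullet> t - b i s)" for i
  have "real_analytic_at (L i) (s0, t0)" if "i < M" for i
    using analytic[OF that] by (simp add: L_def)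
  then have "\<forall>i. \<exists>D. i < M \<longrightarrow> (L i has_derivative D) (at (s0, t0))"
    by (meson real_analytic_at_has_derivative)
  then obtain D where D: "\<And>i. i < M \<Longrightarrow> (L i has_derivative D i) (at (s0, t0))"
    unfolding choice_iff by blast
  have D_second: "D i (0, e) = v i s0 \<bullet> e" if "i < M" for i e
    using D[OF that] unfolding L_def by (rule has_derivative_affine_in_second)
  have rank_consistent: "\<forall>\<^sub>F s in nhds s0. dim ((\<lambda>i. v i s) ` {..<M}) + \<kappa> = DIM('b) \<and>
      (\<exists>t. \<forall>i\<in>{..<M}. v i s \<bullet> t = b i s)"
    using fibres by (rule eventually_mono) (intro conjI dim_rows_add_aff_dim_solutions)
  have rank: "\<forall>\<^sub>F s in nhds s0. dim ((\<lambda>i. v i s) ` {..<M}) = dim ((\<lambda>i. v i s0) ` {..<M})"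
    using rank_consistent by (rule eventually_mono)
      (use eventually_nhds_x_imp_x[OF rank_consistent] in linarith)
  have consistent: "\<forall>\<^sub>F s in nhds s0. \<exists>t. \<forall>i\<in>{..<M}. v i s \<bullet> t = b i s"
    using rank_consistent by (rule eventually_mono) blast
  from constant_rank_redundant_equations[OF cont[simplified] rank consistent]
  obtain I where I: "I \<subseteq> {..<M}" "inj_on (\<lambda>i. v i s0) I" "independent ((\<lambda>i. v i s0) ` I)"
    and redundant: "\<forall>\<^sub>F s in nhds s0.
      \<forall>t. (\<forall>i\<in>I. v i s \<bullet> t = b i s) \<longrightarrow> (\<forall>i\<in>{..<M}. v i s \<bullet> t = b i s)"
    by blast
  have "ordinary_zero {L i | i. i < M} (s0, t0)"
  proof (rule ordinary_zero_subfamilyI[OF _ _ I(1)])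
    show "(L i has_derivative D i) (at (s0, t0))" if "i \<in> I" for i
      using D I(1) that by blast
    show "\<forall>i\<in>I. c i = 0" if "\<forall>e\<in>Basis. (\<Sum>i\<in>I. c i * D i e) = 0" for c
      using that I(1) D_second by (intro rows_independent_in_second_block[OF I(2,3)]) auto
    have "(fst \<longlongrightarrow> s0) (nhds (s0, t0))"
      using tendsto_fst[OF filterlim_ident, of "(s0, t0)"] by simp
    from eventually_compose_filterlim[OF redundant this]
    show "\<forall>\<^sub>F y in nhds (s0, t0). (\<forall>i\<in>I. L i y = 0) \<longrightarrow> (\<forall>i<M. L i y = 0)"
      by eventually_elim (auto simp: L_def split: prod.splits)
  qed (use analytic vanish in \<open>auto simp: L_def\<close>)
  then show ?thesis unfolding L_def .
qed

theorem lemma6p2: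
  fixes V :: "nat \<Rightarrow> 'n2::finite \<Rightarrow> real^'n1 \<Rightarrow> real"
    and b :: "nat \<Rightarrow> real^'n1 \<Rightarrow> real"
    and M :: nat and W :: "(real^'n1) set" and s0 :: "real^'n1" and t0 :: "real^'n2"
    and A :: "((real^'n1) \<times> (real^'n2)) set"
    and L :: "nat \<Rightarrow> (real^'n1) \<times> (real^'n2) \<Rightarrow> real"
    and \<kappa> :: nat
  assumes W: "open W" "s0 \<in> W"
    and V_an: "\<And>i j. i < M \<Longrightarrow> real_analytic_on (V i j) W"
    and b_an: "\<And>i. i < M \<Longrightarrow> real_analytic_on (b i) W"
    and L_def: "\<And>i. L i = (\<lambda>(s, t). (\<Sum>j\<in>UNIV. V i j s * t $ j) - b i s)"
    and vanish: "\<And>i. i < M \<Longrightarrow> L i (s0, t0) = 0"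
    and A_def: "A = {(s, t). s \<in> W \<and> (\<forall>i<M. L i (s, t) = 0)}"
    and dim: "\<And>s1. s1 \<in> W \<Longrightarrow> aff_dim {t. (s1, t) \<in> A} = int \<kappa>"
  shows "ordinary_zero {L i | i. i < M} (s0, t0)"
proof -
  define v where "v i s = (\<chi> j. V i j s)" for i s
  have L_v: "L i = (\<lambda>(s, t). v i s \<bullet> t - b i s)" for i
    by (simp add: L_def v_def inner_vec_def mult.commute)
  have V_at: "real_analytic_at (V i j) s0" if "i < M" for i j
    using V_an[OF that] W(2) unfolding real_analytic_on_def by blast
  have v_cont: "((\<lambda>s. v i s) \<longlongrightarrow> v i s0) (nhds s0)" if "i < M" for i
  proof -
    have "isCont (V i j) s0" for j
      using real_analytic_at_has_derivative[OF V_at[OF that]] has_derivative_continuous by blast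
    then have "isCont (v i) s0"
      unfolding v_def isCont_def by (intro tendsto_vec_lambda)
    then show ?thesis
      by (simp add: isCont_def tendsto_at_iff_tendsto_nhds)
  qed
  have "\<forall>\<^sub>F s in nhds s0. aff_dim {t. \<forall>i\<in>{..<M}. v i s \<bullet> t = b i s} = int \<kappa>"
    using eventually_nhds_in_open[OF W]
    by (rule eventually_mono) (use dim in \<open>auto simp: A_def L_v Ball_def\<close>)
  moreover have "real_analytic_at (L i) (s0, t0)" if "i < M" for i
    using V_at b_an[OF that] W(2) that unfolding L_def real_analytic_on_def
    by (intro real_analytic_at_linear_system) auto
  ultimately show ?thesis
    using vanish v_cont unfolding L_v by (intro ordinary_zero_affine_family) auto
qed

end
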